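(* For every integer $j\geq 3$, the function $l\mapsto \mathbf{g}_1(j,l)$ is strictly increasing on the integers $2\leq l\leq \lfloor (j+1)/2\rfloor$.
   Context: For $\varphi\in\mathbb{R}\setminus2\pi\mathbb{Z}$ let $\mathbf{f}(\varphi)=\frac{1}{8|\sin(\varphi/2)|}\left(\frac{2}{\sin^2(\varphi/2)}-1\right)+\cos\varphi$. For integers $j\geq1$, $l\geq1$ define $\mathbf{g}_1(j,l)=\sum_{k=1}^{j-1}\mathbf{f}\!\left(\frac{2k\pi}{j}\right)\left(1-\cos\frac{2(l-1)k\pi}{j}\right)$. $\lfloor x\rfloor$ is the largest integer not exceeding $x$. *)

theory Defs
  imports Complex_Main
begin

definition bff :: "real \<Rightarrow> real" where
  "bff \<phi> = 1 / (8 * \<bar>sin (\<phi> / 2)\<bar>) * (2 / (sin (\<phi> / 2))^2 - 1) + cos \<phi>"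

definition g1 :: "nat \<Rightarrow> nat \<Rightarrow> real" where
  "g1 j l = (\<Sum>k=1..j-1. bff (2 * real k * pi / real j)
              * (1 - cos (2 * (real l - 1) * real k * pi / real j)))"

end

theory Submission
  imports Defs
begin

(* Write x_k = k pi / j.  Since cos (2(l-1)x) - cos (2lx) = 2 sin ((2l-1)x) sin x, the increment
   g1 j (l+1) - g1 j l is, for n = 2l - 1,
     A(n)/2 - cot (n pi / 2j)/4 + R,   A(n) = sum_k sin (n x_k) / sin^2 x_k   (sin_csc2_sum),
   where R comes from the cos term of bff and is nonnegative because sum_k cos (2q x_k) = -1
   for 0 < q < j.  So it suffices that
     Phi(m) = 2 A(2m+1) - cot ((2m+1) pi / 2j)   (g1_increment_bound)
   is positive for 1 <= m < (j-1) div 2.  The second difference of A in n is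
   -4 cot ((n+2) pi / 2j), and cot is convex and nonnegative on (0, pi/2], hence Phi is concave.
   Phi(1) > 0 by a direct estimate of A(3), and Phi((j-1) div 2) >= 0: for odd j both terms
   vanish, for even j A(j-1) is an alternating sum of decreasing cotangents.  Concavity then
   forces Phi > 0 in between. *)

lemma sum_sin_odd_multiple_eq_cot:
  fixes j p :: nat
  assumes "odd p" "p < 2 * j"
  shows "(\<Sum>k=1..j-1. sin (real p * (real k * pi / real j))) = cot (real p * pi / (2 * real j))"
proof -
  define a where "a = real p * pi / (2 * real j)"
  have "0 < p" using \<open>odd p\<close> by (cases p) auto
  then have "0 < a" "a < pi" unfolding a_def using assms(2) by (auto simp: field_simps)
  then have "0 < sin a" by (rule sin_gt_zero)
  define F where "F k = cos ((2 * real k - 1) * a)" for k :: nat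
  have telescope: "2 * sin a * sin (real p * (real k * pi / real j)) = F k - F (Suc k)" for k
  proof -
    have "real p * (real k * pi / real j) = 2 * real k * a" unfolding a_def using assms by (simp add: field_simps)
    then show ?thesis unfolding F_def by (simp add: algebra_simps cos_add cos_diff)
  qed
  have "2 * sin a * (\<Sum>k=1..j-1. sin (real p * (real k * pi / real j))) = (\<Sum>k=1..j-1. F k - F (Suc k))"
    by (simp only: sum_distrib_left telescope)
  also have "\<dots> = F 1 - F j"
    using sum_Suc_diff[of 1 "j-1" F] assms by (simp add: sum_subtractf)
  also have "F j = - cos a"
  proof -
    have "(2 * real j - 1) * a = real p * pi - a" unfolding a_def using assms by (simp add: field_simps)
    then show ?thesis unfolding F_def using \<open>odd p\<close> by (simp add: cos_diff)
  qed
  finally have "2 * sin a * (\<Sum>k=1..j-1. sin (real p * (real k * pi / real j))) = 2 * cos a"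
    by (simp add: F_def)
  then show ?thesis using \<open>0 < sin a\<close> unfolding a_def[symmetric] cot_def by (simp add: field_simps)
qed

lemma sum_cos_even_multiple:
  fixes j q :: nat
  assumes "0 < q" "q < j"
  shows "(\<Sum>k=1..j-1. cos (2 * real q * (real k * pi / real j))) = -1"
proof -
  define a where "a = real q * pi / real j"
  have "0 < a" "a < pi" unfolding a_def using assms by (auto simp: field_simps)
  then have "0 < sin a" by (rule sin_gt_zero)
  define G where "G k = sin ((2 * real k - 1) * a)" for k :: nat
  have telescope: "2 * sin a * cos (2 * real q * (real k * pi / real j)) = G (Suc k) - G k" for k
  proof -
    have "2 * real q * (real k * pi / real j) = 2 * real k * a" unfolding a_def by simp
    then show ?thesis unfolding G_def by (simp add: algebra_simps sin_add sin_diff)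
  qed
  have "2 * sin a * (\<Sum>k=1..j-1. cos (2 * real q * (real k * pi / real j))) = (\<Sum>k=1..j-1. G (Suc k) - G k)"
    by (simp only: sum_distrib_left telescope)
  also have "\<dots> = G j - G 1" using sum_Suc_diff[of 1 "j-1" G] assms by simp
  also have "G j = - sin a"
  proof -
    have "(2 * real j - 1) * a = real (2 * q) * pi - a" unfolding a_def using assms by (simp add: field_simps)
    then show ?thesis unfolding G_def by (simp add: sin_diff)
  qed
  finally have "2 * sin a * ((\<Sum>k=1..j-1. cos (2 * real q * (real k * pi / real j))) + 1) = 0"
    by (simp add: G_def algebra_simps)
  then show ?thesis using \<open>0 < sin a\<close> by simp
qed

lemma sum_cos_even_multiple_ge:
  fixes j q :: nat
  assumes "q < j"
  shows "-1 \<le> (\<Sum>k=1..j-1. cos (2 * real q * (real k * pi / real j)))"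
  using assms sum_cos_even_multiple[of q j] by (cases "q = 0") auto

lemma sin_pi_fraction_pos: "0 < k \<Longrightarrow> k < j \<Longrightarrow> 0 < sin (real k * pi / real j)"
  by (rule sin_gt_zero) (auto simp: field_simps)

lemma sin_second_difference:
  fixes u x :: real
  shows "sin (u + 2 * x) - 2 * sin u + sin (u - 2 * x) = - 4 * sin u * (sin x)\<^sup>2"
  unfolding sin_add sin_diff cos_double_sin by (simp add: algebra_simps)

lemma sin_treble: "sin (3 * x) = 3 * sin x - 4 * sin x ^ 3" for x :: real
proof -
  have "sin (3 * x) = sin (2 * x + x)" by simp
  also have "\<dots> = 2 * sin x * (cos x)\<^sup>2 + (1 - 2 * (sin x)\<^sup>2) * sin x"
    unfolding sin_add sin_double cos_double_sin by (simp add: power2_eq_square)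
  also have "\<dots> = 3 * sin x - 4 * sin x ^ 3"
    unfolding cos_squared_eq by (simp add: power2_eq_square power3_eq_cube algebra_simps)
  finally show ?thesis .
qed

lemma sin_mul_cos_double_mul_sin:
  fixes x v :: real
  shows "2 * sin x * cos (2 * x) * sin (v + x)
       = (cos (v + 2 * x) + cos (v - 2 * x) - cos (v + 4 * x) - cos v) / 2"
proof -
  have "2 * sin x * cos (2 * x) * sin (v + x) = cos (2 * x) * (2 * (sin x * sin (v + x)))"
    by (simp add: ac_simps)
  also have "sin x * sin (v + x) = (cos v - cos (v + 2 * x)) / 2"
    unfolding sin_times_sin by (simp add: algebra_simps)
  also have "cos (2 * x) * (2 * ((cos v - cos (v + 2 * x)) / 2))
      = cos v * cos (2 * x) - cos (v + 2 * x) * cos (2 * x)"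
    by (simp add: field_simps)
  also have "cos v * cos (2 * x) = (cos (v - 2 * x) + cos (v + 2 * x)) / 2"
    unfolding cos_times_cos by (simp add: algebra_simps)
  also have "cos (v + 2 * x) * cos (2 * x) = (cos v + cos (v + 4 * x)) / 2"
    unfolding cos_times_cos by (simp add: algebra_simps)
  finally show ?thesis by (simp add: field_simps)
qed

lemma cot_nonneg: "0 < x \<Longrightarrow> x \<le> pi / 2 \<Longrightarrow> 0 \<le> cot (x::real)"
  unfolding cot_def by (simp add: cos_ge_zero sin_ge_zero)

lemma cot_antimono:
  fixes x y :: real
  assumes "0 < x" "x \<le> y" "y < pi"
  shows "cot y \<le> cot x"
proof -
  have "0 < sin x" "0 < sin y" using assms by (auto intro: sin_gt_zero)
  moreover have "0 \<le> sin (y - x)" using assms by (intro sin_ge_zero) auto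
  ultimately show ?thesis unfolding cot_def by (simp add: sin_diff divide_simps algebra_simps)
qed

lemma cot_midpoint_convex:
  fixes c h :: real
  assumes "0 < h" "h < c" "c + h \<le> pi / 2"
  shows "2 * cot c \<le> cot (c - h) + cot (c + h)"
proof -
  have pos: "0 < sin (c - h)" "0 < sin (c + h)" "0 < sin c" using assms by (auto intro!: sin_gt_zero)
  have "0 \<le> cos c" using assms by (intro cos_ge_zero) auto
  have prod: "sin (c - h) * sin (c + h) = (sin c)\<^sup>2 - (sin h)\<^sup>2"
  proof -
    have "sin (c - h) * sin (c + h) = (cos (2 * h) - cos (2 * c)) / 2"
      unfolding sin_times_sin by (simp add: algebra_simps)
    then show ?thesis by (simp add: cos_double_sin)
  qed
  have "cot (c - h) + cot (c + h) = sin (2 * c) / (sin (c - h) * sin (c + h))"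
  proof -
    have "sin (2 * c) = sin ((c - h) + (c + h))" by simp
    then show ?thesis using pos unfolding cot_def by (simp only: sin_add) (simp add: field_simps)
  qed
  also have "\<dots> = 2 * sin c * cos c / ((sin c)\<^sup>2 - (sin h)\<^sup>2)" by (simp add: prod sin_double)
  also have "\<dots> \<ge> 2 * sin c * cos c / (sin c)\<^sup>2"
  proof (rule divide_left_mono)
    have "0 < (sin c)\<^sup>2 - (sin h)\<^sup>2" using pos prod by (metis mult_pos_pos)
    then show "0 < (sin c)\<^sup>2 * ((sin c)\<^sup>2 - (sin h)\<^sup>2)" using pos by simp
  qed (use pos \<open>0 \<le> cos c\<close> in auto)
  finally show ?thesis using pos unfolding cot_def by (simp add: power2_eq_square)
qed

lemma cot_half_angle:
  fixes x :: real
  assumes "sin x \<noteq> 0"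
  shows "cot (x / 2) = (1 + cos x) / sin x"
proof -
  define a where "a = x / 2"
  have x: "x = 2 * a" unfolding a_def by simp
  have "sin a \<noteq> 0" "cos a \<noteq> 0" using assms unfolding x sin_double by auto
  then show ?thesis unfolding a_def[symmetric] x cot_def sin_double cos_double_cos
    by (simp add: field_simps power2_eq_square)
qed

lemma inverse_sin_eq_cot_diff:
  fixes x :: real
  assumes "sin x \<noteq> 0"
  shows "1 / sin x = cot (x / 2) - cot x"
  unfolding cot_half_angle[OF assms] by (simp add: cot_def flip: diff_divide_distrib)

lemma alternating_sum_ge_last:
  fixes f :: "nat \<Rightarrow> real"
  assumes "\<And>k. 1 \<le> k \<Longrightarrow> k < 2 * r + 1 \<Longrightarrow> f (Suc k) \<le> f k"
  shows "f (2 * r + 1) \<le> (\<Sum>k=1..2*r+1. (- 1) ^ Suc k * f k)"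
  using assms
proof (induction r)
  case 0
  then show ?case by simp
next
  case (Suc r)
  have "(- 1 :: real) ^ (r + r) = 1" by (simp flip: mult_2)
  then have "(\<Sum>k=1..2*Suc r+1. (- 1) ^ Suc k * f k)
      = (\<Sum>k=1..2*r+1. (- 1) ^ Suc k * f k) - f (2 * r + 2) + f (2 * r + 3)"
    by (simp add: numeral_eq_Suc)
  moreover have "f (2 * r + 1) \<le> (\<Sum>k=1..2*r+1. (- 1) ^ Suc k * f k)" using Suc by simp
  moreover have "f (2 * r + 2) \<le> f (2 * r + 1)" using Suc.prems[of "2 * r + 1"] by simp
  ultimately show ?case by simp
qed

lemma concave_seq_pos:
  fixes F :: "nat \<Rightarrow> real"
  assumes concave: "\<And>r. 1 \<le> r \<Longrightarrow> r + 2 \<le> T \<Longrightarrow> F (r + 2) - F (r + 1) \<le> F (r + 1) - F r"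
    and "0 < F 1" "0 \<le> F T" "1 \<le> m" "m < T"
  shows "0 < F m"
proof -
  define d where "d r = F (Suc r) - F r" for r
  have d_antimono: "d r' \<le> d r" if "1 \<le> r" "r \<le> r'" "r' < T" for r r'
  proof (rule lift_Suc_antimono_le_ivl[of "{1..<T-1}"])
    fix n assume "n \<in> {1..<T-1}"
    then show "d (Suc n) \<le> d n" using concave[of n] unfolding d_def by (auto simp: numeral_eq_Suc)
  qed (use that in auto)
  consider "m = 1" | "2 \<le> m" "0 \<le> d (m - 1)" | "2 \<le> m" "d (m - 1) < 0"
    using \<open>1 \<le> m\<close> by linarith
  then show ?thesis
  proof cases
    case 1
    then show ?thesis using \<open>0 < F 1\<close> by simp
  next
    case 2
    have "0 \<le> (\<Sum>i=1..m-1. d i)"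
      using d_antimono[of _ "m - 1"] 2 \<open>m < T\<close> by (intro sum_nonneg) force
    also have "\<dots> = F m - F 1" unfolding d_def using sum_Suc_diff[of 1 "m - 1" F] \<open>1 \<le> m\<close> by simp
    finally show ?thesis using \<open>0 < F 1\<close> by simp
  next
    case 3
    have "F T - F m = (\<Sum>i=m..T-1. d i)" unfolding d_def using sum_Suc_diff[of m "T - 1" F] \<open>m < T\<close> by simp
    also have "\<dots> \<le> (\<Sum>i=m..T-1. d (m - 1))"
      using d_antimono[of "m - 1"] 3 by (intro sum_mono) auto
    also have "\<dots> < 0" using 3 \<open>m < T\<close> by (simp add: mult_pos_neg)
    finally show ?thesis using \<open>0 \<le> F T\<close> by simp
  qed
qed

definition cot_frac :: "nat \<Rightarrow> nat \<Rightarrow> real" where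
  "cot_frac j p = cot (real p * pi / (2 * real j))"

lemma frac_pi_half_bounds:
  assumes "1 \<le> p" "p \<le> j"
  shows "0 < real p * pi / (2 * real j)" "real p * pi / (2 * real j) \<le> pi / 2"
  using assms by (auto simp: field_simps)

lemma cot_frac_nonneg: "1 \<le> p \<Longrightarrow> p \<le> j \<Longrightarrow> 0 \<le> cot_frac j p"
  unfolding cot_frac_def using frac_pi_half_bounds by (blast intro: cot_nonneg)

lemma cot_frac_antimono:
  assumes "1 \<le> p" "p \<le> q" "q \<le> j"
  shows "cot_frac j q \<le> cot_frac j p"
  unfolding cot_frac_def
proof (rule cot_antimono)
  show "0 < real p * pi / (2 * real j)" using frac_pi_half_bounds assms by auto
  show "real p * pi / (2 * real j) \<le> real q * pi / (2 * real j)"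
    using assms by (simp add: divide_right_mono)
  have "real q * pi / (2 * real j) \<le> pi / 2" using assms by (intro frac_pi_half_bounds) auto
  then show "real q * pi / (2 * real j) < pi" using pi_gt_zero by linarith
qed

lemma cot_frac_convex:
  assumes "1 \<le> n" "n + 4 \<le> j"
  shows "2 * cot_frac j (n + 2) \<le> cot_frac j n + cot_frac j (n + 4)"
proof -
  define c h where "c = real (n + 2) * pi / (2 * real j)" and "h = pi / real j"
  have "c - h = real n * pi / (2 * real j)" "c + h = real (n + 4) * pi / (2 * real j)"
    unfolding c_def h_def using assms by (auto simp: field_simps)
  moreover have "2 * cot c \<le> cot (c - h) + cot (c + h)"
  proof (rule cot_midpoint_convex)
    show "0 < h" "h < c" unfolding h_def c_def using assms by (auto simp: field_simps)
    show "c + h \<le> pi / 2" using \<open>c + h = _\<close> frac_pi_half_bounds(2)[of "n + 4" j] assms by simp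
  qed
  ultimately show ?thesis unfolding cot_frac_def c_def by simp
qed

definition sin_csc2_sum :: "nat \<Rightarrow> nat \<Rightarrow> real" where
  "sin_csc2_sum j n = (\<Sum>k=1..j-1. sin (real n * (real k * pi / real j)) / (sin (real k * pi / real j))\<^sup>2)"

lemma sin_csc2_sum_second_difference:
  assumes "odd n" "n + 2 < 2 * j"
  shows "sin_csc2_sum j (n + 4) - 2 * sin_csc2_sum j (n + 2) + sin_csc2_sum j n
         = - 4 * cot_frac j (n + 2)"
proof -
  have pointwise: "sin (real (n + 4) * x) / (sin x)\<^sup>2 - 2 * (sin (real (n + 2) * x) / (sin x)\<^sup>2)
      + sin (real n * x) / (sin x)\<^sup>2 = - 4 * sin (real (n + 2) * x)" if "sin x \<noteq> 0" for x
  proof -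
    define u where "u = real (n + 2) * x"
    have "real (n + 4) * x = u + 2 * x" "real n * x = u - 2 * x"
      unfolding u_def by (simp_all add: algebra_simps)
    then have "sin (real (n + 4) * x) / (sin x)\<^sup>2 - 2 * (sin (real (n + 2) * x) / (sin x)\<^sup>2)
        + sin (real n * x) / (sin x)\<^sup>2 = (sin (u + 2 * x) - 2 * sin u + sin (u - 2 * x)) / (sin x)\<^sup>2"
      unfolding u_def by (simp add: diff_divide_distrib add_divide_distrib)
    also have "\<dots> = - 4 * sin u" unfolding sin_second_difference using that by simp
    finally show ?thesis unfolding u_def .
  qed
  have "sin_csc2_sum j (n + 4) - 2 * sin_csc2_sum j (n + 2) + sin_csc2_sum j n
        = (\<Sum>k=1..j-1. - 4 * sin (real (n + 2) * (real k * pi / real j)))"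
    unfolding sin_csc2_sum_def sum_subtractf[symmetric] sum.distrib[symmetric] sum_distrib_left
  proof (rule sum.cong[OF refl], rule pointwise)
    fix k assume "k \<in> {1..j-1}"
    then have "0 < sin (real k * pi / real j)" by (intro sin_pi_fraction_pos) auto
    then show "sin (real k * pi / real j) \<noteq> 0" by simp
  qed
  also have "\<dots> = - 4 * cot_frac j (n + 2)"
    using sum_sin_odd_multiple_eq_cot[of "n + 2" j] assms
    by (simp add: cot_frac_def sum_negf sum_distrib_left[symmetric])
  finally show ?thesis .
qed

lemma sum_alternating_cot_even_eq_zero:
  assumes "even j"
  shows "(\<Sum>k=1..j-1. (- 1) ^ k * cot (real k * pi / real j)) = 0"
proof -
  define g where "g k = (- 1) ^ k * cot (real k * pi / real j)" for k
  have "sum g {1..j-1} = (\<Sum>k=1..j-1. g (j - 1 + 1 - k))"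
    by (rule sum.atLeastAtMost_rev)
  also have "\<dots> = (\<Sum>k=1..j-1. - g k)"
  proof (rule sum.cong[OF refl])
    fix k assume "k \<in> {1..j-1}"
    then have "k < j" by auto
    then have "real (j - k) * pi / real j = pi - real k * pi / real j"
      by (simp add: field_simps)
    moreover have "(- 1 :: real) ^ (j - k) = (- 1) ^ k"
      using \<open>even j\<close> \<open>k < j\<close> by (simp add: minus_one_power_iff)
    moreover have "j - 1 + 1 - k = j - k" using \<open>k < j\<close> by simp
    ultimately show "g (j - 1 + 1 - k) = - g k" unfolding g_def by (simp add: cot_def sin_diff cos_diff)
  qed
  finally show ?thesis unfolding g_def[symmetric] by (simp add: sum_negf)
qed

lemma sin_csc2_sum_pred_even:
  assumes "even j"
  shows "sin_csc2_sum j (j - 1) = (\<Sum>k=1..j-1. (- 1) ^ Suc k * cot_frac j k)"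
proof -
  have "sin_csc2_sum j (j - 1) = (\<Sum>k=1..j-1. (- 1) ^ Suc k * cot_frac j k
          + (- 1) ^ k * cot (real k * pi / real j))"
    unfolding sin_csc2_sum_def
  proof (rule sum.cong[OF refl])
    fix k assume "k \<in> {1..j-1}"
    then have "k < j" "0 < k" by auto
    define x where "x = real k * pi / real j"
    have "0 < sin x" unfolding x_def using \<open>k < j\<close> \<open>0 < k\<close> by (rule sin_pi_fraction_pos[rotated])
    have "real (j - 1) * x = real k * pi - x" unfolding x_def using \<open>k < j\<close>
      by (simp add: field_simps)
    then have "sin (real (j - 1) * x) = (- 1) ^ Suc k * sin x" by (simp add: sin_diff)
    then have "sin (real (j - 1) * x) / (sin x)\<^sup>2 = (- 1) ^ Suc k * (1 / sin x)"
      using \<open>0 < sin x\<close> by (simp add: power2_eq_square)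
    also have "\<dots> = (- 1) ^ Suc k * (cot (x / 2) - cot x)"
      using \<open>0 < sin x\<close> by (simp add: inverse_sin_eq_cot_diff)
    also have "\<dots> = (- 1) ^ Suc k * cot_frac j k + (- 1) ^ k * cot x"
      unfolding cot_frac_def x_def by (simp add: algebra_simps)
    finally show "sin (real (j - 1) * (real k * pi / real j)) / (sin (real k * pi / real j))\<^sup>2
        = (- 1) ^ Suc k * cot_frac j k + (- 1) ^ k * cot (real k * pi / real j)"
      unfolding x_def .
  qed
  then show ?thesis using sum_alternating_cot_even_eq_zero[OF assms] by (simp add: sum.distrib sum_subtractf sum_negf)
qed

lemma sin_csc2_sum_3:
  "sin_csc2_sum j 3 = (\<Sum>k=1..j-1. 3 / sin (real k * pi / real j) - 4 * sin (real k * pi / real j))"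
  unfolding sin_csc2_sum_def
proof (rule sum.cong[OF refl])
  fix k assume "k \<in> {1..j-1}"
  define x where "x = real k * pi / real j"
  have "0 < sin x" unfolding x_def using \<open>k \<in> {1..j-1}\<close> by (intro sin_pi_fraction_pos) auto
  then have "sin (3 * x) / (sin x)\<^sup>2 = 3 / sin x - 4 * sin x"
    unfolding sin_treble by (simp add: field_simps power2_eq_square power3_eq_cube)
  then show "sin (real 3 * (real k * pi / real j)) / (sin (real k * pi / real j))\<^sup>2
      = 3 / sin (real k * pi / real j) - 4 * sin (real k * pi / real j)"
    unfolding x_def by simp
qed

lemma sum_inverse_sin_ge:
  assumes "5 \<le> j"
  shows "2 / sin (pi / real j) + 2 / sin (2 * pi / real j) \<le> (\<Sum>k=1..j-1. 1 / sin (real k * pi / real j))"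
proof -
  define s where "s k = 1 / sin (real k * pi / real j)" for k
  have "real (j - 1) * pi / real j = pi - pi / real j" "real (j - 2) * pi / real j = pi - 2 * pi / real j"
    using assms by (simp_all add: field_simps)
  then have "s (j - 1) = s 1" "s (j - 2) = s 2" unfolding s_def by (simp_all add: sin_diff)
  moreover have "j - 1 \<noteq> 1" "j - 1 \<noteq> 2" "j - 2 \<noteq> 1" "j - 2 \<noteq> 2" "j - 2 \<noteq> j - 1" using assms by auto
  ultimately have "(\<Sum>k\<in>{1, 2, j - 2, j - 1}. s k) = 2 / sin (pi / real j) + 2 / sin (2 * pi / real j)"
    unfolding s_def by simp
  moreover have "(\<Sum>k\<in>{1, 2, j - 2, j - 1}. s k) \<le> (\<Sum>k=1..j-1. s k)"
    using assms sin_pi_fraction_pos by (intro sum_mono2) (auto simp: s_def less_imp_le)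
  ultimately show ?thesis unfolding s_def by simp
qed

definition g1_increment_bound :: "nat \<Rightarrow> nat \<Rightarrow> real" where
  "g1_increment_bound j m = 2 * sin_csc2_sum j (2 * m + 1) - cot_frac j (2 * m + 1)"

lemma g1_increment_bound_concave:
  assumes "1 \<le> r" "r + 2 \<le> (j - 1) div 2"
  shows "g1_increment_bound j (r + 2) - g1_increment_bound j (r + 1)
         \<le> g1_increment_bound j (r + 1) - g1_increment_bound j r"
proof -
  define n where "n = 2 * r + 1"
  have "n + 4 \<le> j" using assms unfolding n_def by linarith
  have second_difference:
    "sin_csc2_sum j (n + 4) - 2 * sin_csc2_sum j (n + 2) + sin_csc2_sum j n = - 4 * cot_frac j (n + 2)"
    using \<open>n + 4 \<le> j\<close> by (intro sin_csc2_sum_second_difference) (auto simp: n_def)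
  have "2 * cot_frac j (n + 2) \<le> cot_frac j n + cot_frac j (n + 4)"
    using \<open>n + 4 \<le> j\<close> by (intro cot_frac_convex) (auto simp: n_def)
  moreover have "0 \<le> cot_frac j (n + 2)"
    using \<open>n + 4 \<le> j\<close> by (intro cot_frac_nonneg) auto
  moreover have idx: "2 * (r + 2) + 1 = n + 4" "2 * (r + 1) + 1 = n + 2" "2 * r + 1 = n"
    unfolding n_def by simp_all
  ultimately show ?thesis using second_difference unfolding g1_increment_bound_def idx by linarith
qed

lemma g1_increment_bound_one_pos:
  assumes "5 \<le> j"
  shows "0 < g1_increment_bound j 1"
proof -
  define b where "b = pi / real j"
  have "0 < b" "b \<le> pi / 5" unfolding b_def using assms by (auto simp: field_simps)
  then have "0 < sin b" "0 < cos b" by (auto intro!: sin_gt_zero cos_gt_zero)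
  have "cos b \<le> 1" by simp
  have "sin (2 * pi / real j) = 2 * sin b * cos b" using sin_double[of b] unfolding b_def by simp
  then have sum_csc: "2 / sin b + 1 / (sin b * cos b) \<le> (\<Sum>k=1..j-1. 1 / sin (real k * pi / real j))"
    using sum_inverse_sin_ge[OF assms] unfolding b_def[symmetric] by simp
  have sum_sin: "(\<Sum>k=1..j-1. sin (real k * pi / real j)) = (1 + cos b) / sin b"
    using sum_sin_odd_multiple_eq_cot[of 1 j] assms cot_half_angle[of b] \<open>0 < sin b\<close>
    by (simp add: b_def mult.commute)
  have "cot_frac j 3 \<le> cot_frac j 2" using assms by (intro cot_frac_antimono) auto
  then have cot3: "cot_frac j 3 \<le> cos b / sin b" by (simp add: cot_frac_def b_def cot_def)
  have "(cos b)\<^sup>2 \<le> cos b" using \<open>0 < cos b\<close> \<open>cos b \<le> 1\<close> by (simp add: power2_eq_square mult_left_le)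
  then have "0 < 6 + 4 * cos b - 9 * (cos b)\<^sup>2" using \<open>cos b \<le> 1\<close> by linarith
  then have "0 < (6 + 4 * cos b - 9 * (cos b)\<^sup>2) / (sin b * cos b)"
    using \<open>0 < sin b\<close> \<open>0 < cos b\<close> by simp
  also have "\<dots> = 2 * (3 * (2 / sin b + 1 / (sin b * cos b)) - 4 * ((1 + cos b) / sin b)) - cos b / sin b"
    using \<open>0 < sin b\<close> \<open>0 < cos b\<close> by (simp add: field_simps power2_eq_square)
  also have "\<dots> \<le> 2 * (3 * (\<Sum>k=1..j-1. 1 / sin (real k * pi / real j))
      - 4 * (\<Sum>k=1..j-1. sin (real k * pi / real j))) - cot_frac j 3"
    using sum_csc sum_sin cot3 by argo
  also have "\<dots> = g1_increment_bound j 1"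
    by (simp add: g1_increment_bound_def sin_csc2_sum_3 sum_subtractf sum_distrib_left)
  finally show ?thesis .
qed

lemma g1_increment_bound_last_nonneg:
  assumes "3 \<le> j"
  shows "0 \<le> g1_increment_bound j ((j - 1) div 2)"
proof (cases "even j")
  case False
  then have "2 * ((j - 1) div 2) + 1 = j" by presburger
  moreover have "sin_csc2_sum j j = 0" "cot_frac j j = 0"
    using assms by (simp_all add: sin_csc2_sum_def cot_frac_def cot_def)
  ultimately show ?thesis unfolding g1_increment_bound_def by simp
next
  case True
  define r where "r = (j - 2) div 2"
  have last: "2 * ((j - 1) div 2) + 1 = j - 1" "2 * r + 1 = j - 1"
    using True assms unfolding r_def by presburger+
  have "cot_frac j (j - 1) \<le> (\<Sum>k=1..2*r+1. (- 1) ^ Suc k * cot_frac j k)"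
    unfolding last(2)[symmetric] using last(2)
    by (intro alternating_sum_ge_last cot_frac_antimono) auto
  also have "\<dots> = sin_csc2_sum j (j - 1)" unfolding last(2) sin_csc2_sum_pred_even[OF True] ..
  finally have "cot_frac j (j - 1) \<le> sin_csc2_sum j (j - 1)" .
  moreover have "0 \<le> cot_frac j (j - 1)" using assms by (intro cot_frac_nonneg) auto
  ultimately show ?thesis unfolding g1_increment_bound_def last(1) by simp
qed

lemma g1_increment_bound_pos:
  assumes "5 \<le> j" "1 \<le> m" "m < (j - 1) div 2"
  shows "0 < g1_increment_bound j m"
proof (rule concave_seq_pos[where T = "(j - 1) div 2"])
  show "0 < g1_increment_bound j 1" using assms(1) by (rule g1_increment_bound_one_pos)
  show "0 \<le> g1_increment_bound j ((j - 1) div 2)" using assms by (intro g1_increment_bound_last_nonneg) simp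
qed (use assms g1_increment_bound_concave in auto)

lemma bff_double_mul_cos_diff:
  fixes x u :: real
  assumes "0 < sin x"
  shows "bff (2 * x) * (cos (u - x) - cos (u + x))
       = sin u / (2 * (sin x)\<^sup>2) - sin u / 4 + 2 * sin x * cos (2 * x) * sin u"
proof -
  have diff: "cos (u - x) - cos (u + x) = 2 * sin u * sin x" by (simp add: cos_diff cos_add)
  have bff: "bff (2 * x) = 1 / (8 * sin x) * (2 / (sin x)\<^sup>2 - 1) + cos (2 * x)"
    unfolding bff_def using assms by simp
  show ?thesis unfolding diff bff using assms
    by (simp add: divide_simps power2_eq_square) (simp add: algebra_simps)
qed

lemma sum_sin_cos_double_sin_nonneg:
  assumes "1 \<le> m" "m + 2 < j"
  shows "0 \<le> (\<Sum>k=1..j-1. 2 * sin (real k * pi / real j) * cos (2 * (real k * pi / real j))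
                           * sin (real (2 * m + 1) * (real k * pi / real j)))"
proof -
  define C where "C q = (\<Sum>k=1..j-1. cos (2 * real q * (real k * pi / real j)))" for q
  have pointwise: "2 * sin x * cos (2 * x) * sin (real (2 * m + 1) * x)
      = (cos (2 * real (m + 1) * x) + cos (2 * real (m - 1) * x)
         - cos (2 * real (m + 2) * x) - cos (2 * real m * x)) / 2" for x :: real
  proof -
    have "real (2 * m + 1) * x = 2 * real m * x + x" "2 * real (m + 1) * x = 2 * real m * x + 2 * x"
      "2 * real (m - 1) * x = 2 * real m * x - 2 * x" "2 * real (m + 2) * x = 2 * real m * x + 4 * x"
      using assms by (simp_all add: algebra_simps)
    then show ?thesis using sin_mul_cos_double_mul_sin[of x "2 * real m * x"] by simp
  qed
  have "(\<Sum>k=1..j-1. 2 * sin (real k * pi / real j) * cos (2 * (real k * pi / real j))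
                           * sin (real (2 * m + 1) * (real k * pi / real j)))
      = (C (m + 1) + C (m - 1) - C (m + 2) - C m) / 2"
    unfolding pointwise C_def sum_divide_distrib[symmetric] sum_subtractf sum.distrib ..
  moreover have "C (m + 1) = -1" "C (m + 2) = -1" "C m = -1"
    unfolding C_def using assms by (intro sum_cos_even_multiple; simp)+
  moreover have "-1 \<le> C (m - 1)"
    unfolding C_def using assms by (intro sum_cos_even_multiple_ge) simp
  ultimately show ?thesis by simp
qed

lemma g1_increment_ge:
  assumes "1 \<le> m" "2 * m + 3 \<le> j"
  shows "g1_increment_bound j m / 4 \<le> g1 j (m + 2) - g1 j (m + 1)"
proof -
  define n where "n = 2 * m + 1"
  define x where "x k = real k * pi / real j" for k
  define R where "R = (\<Sum>k=1..j-1. 2 * sin (x k) * cos (2 * x k) * sin (real n * x k))"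
  have pointwise:
    "bff (2 * real k * pi / real j) * (1 - cos (2 * (real (m + 2) - 1) * real k * pi / real j))
     - bff (2 * real k * pi / real j) * (1 - cos (2 * (real (m + 1) - 1) * real k * pi / real j))
     = sin (real n * x k) / (2 * (sin (x k))\<^sup>2) - sin (real n * x k) / 4
       + 2 * sin (x k) * cos (2 * x k) * sin (real n * x k)"
    if "k \<in> {1..j-1}" for k
  proof -
    have "0 < sin (x k)" unfolding x_def using that by (intro sin_pi_fraction_pos) auto
    moreover have angles: "2 * real k * pi / real j = 2 * x k"
      "2 * (real (m + 2) - 1) * real k * pi / real j = real n * x k + x k"
      "2 * (real (m + 1) - 1) * real k * pi / real j = real n * x k - x k"
      using assms unfolding x_def n_def by (simp_all add: field_simps)
    ultimately show ?thesis unfolding angles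
      using bff_double_mul_cos_diff[of "x k" "real n * x k"] by (simp add: algebra_simps)
  qed
  have "g1 j (m + 2) - g1 j (m + 1)
      = (\<Sum>k=1..j-1. sin (real n * x k) / (2 * (sin (x k))\<^sup>2) - sin (real n * x k) / 4
                     + 2 * sin (x k) * cos (2 * x k) * sin (real n * x k))"
    unfolding g1_def sum_subtractf[symmetric] by (rule sum.cong[OF refl]) (rule pointwise)
  also have "\<dots> = (\<Sum>k=1..j-1. sin (real n * x k) / (2 * (sin (x k))\<^sup>2))
      - (\<Sum>k=1..j-1. sin (real n * x k)) / 4 + R"
    by (simp only: R_def sum.distrib sum_subtractf sum_divide_distrib)
  also have "(\<Sum>k=1..j-1. sin (real n * x k) / (2 * (sin (x k))\<^sup>2)) = sin_csc2_sum j n / 2"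
    unfolding sin_csc2_sum_def sum_divide_distrib x_def by (simp add: mult.commute)
  also have "(\<Sum>k=1..j-1. sin (real n * x k)) = cot_frac j n"
    unfolding x_def cot_frac_def using assms by (intro sum_sin_odd_multiple_eq_cot) (auto simp: n_def)
  finally have "g1 j (m + 2) - g1 j (m + 1) = g1_increment_bound j m / 4 + R"
    by (simp add: g1_increment_bound_def n_def)
  moreover have "0 \<le> R" unfolding R_def x_def n_def using assms by (intro sum_sin_cos_double_sin_nonneg) auto
  ultimately show ?thesis by simp
qed

lemma g1_Suc_gt:
  assumes "2 \<le> l" "2 * l + 1 \<le> j"
  shows "g1 j l < g1 j (Suc l)"
proof -
  define m where "m = l - 1"
  have "l = m + 1" "1 \<le> m" unfolding m_def using assms(1) by simp_all
  then have "0 < g1_increment_bound j m" using assms by (intro g1_increment_bound_pos) auto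
  moreover have "g1_increment_bound j m / 4 \<le> g1 j (m + 2) - g1 j (m + 1)"
    using \<open>l = m + 1\<close> \<open>1 \<le> m\<close> assms by (intro g1_increment_ge) auto
  ultimately show ?thesis using \<open>l = m + 1\<close> by simp
qed

theorem proposition4p1:
  fixes j :: nat
  assumes "j \<ge> 3"
  shows "strict_mono_on {l::nat. 2 \<le> l \<and> int l \<le> \<lfloor>(real j + 1) / 2\<rfloor>} (\<lambda>l. g1 j l)"
proof (rule strict_mono_onI)
  have "(real j + 1) / 2 = real (j + 1) / real 2" by simp
  then have floor_eq: "\<lfloor>(real j + 1) / 2\<rfloor> = int ((j + 1) div 2)" by (simp only: floor_divide_of_nat_eq)
  fix l l' assume "l \<in> {l. 2 \<le> l \<and> int l \<le> \<lfloor>(real j + 1) / 2\<rfloor>}"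
    and "l' \<in> {l. 2 \<le> l \<and> int l \<le> \<lfloor>(real j + 1) / 2\<rfloor>}" and "l < l'"
  then have "2 \<le> l" "l' \<le> (j + 1) div 2" unfolding floor_eq by auto
  show "g1 j l < g1 j l'"
  proof (rule lift_Suc_mono_less_ivl[of "{2..<(j + 1) div 2}" "g1 j"])
    show "g1 j n < g1 j (Suc n)" if "n \<in> {2..<(j + 1) div 2}" for n
      using that by (intro g1_Suc_gt) auto
  qed (use \<open>2 \<le> l\<close> \<open>l' \<le> (j + 1) div 2\<close> \<open>l < l'\<close> in auto)
qed

end
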